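(* Let $k\leq n-2$ and $m\geq1$, or let $k=n-1$ and $m\geq2$. If $G$ is minor maximal amongst graphs with $n$ vertices, at most $m$ parallel edges between any given pair of vertices, and spectator floor $k$, then $G$ is an $m$-saturated crowded $(n-k)$-parade.
   Context: All graphs are finite, have at least one vertex, have no loops, and may have multiple (parallel) edges. A minor of $H$ is any graph obtained from $H$ by a sequence of: deleting an isolated vertex, deleting an edge, contracting an edge that has no edge parallel to it. A graph $G$ in a class $\mathcal{C}$ is minor maximal in $\mathcal{C}$ if no graph in $\mathcal{C}$ other than $G$ has $G$ as a minor. A unique shortest path is a shortest $u$–$v$ path $P$ such that every $u$–$v$ path with the same number of vertices is identical to $P$, where two paths with different edge sequences are different even if their vertex sequences agree; a single vertex is a unique shortest path. The parade number $\mathrm{usp}(G)$ is the largest number of vertices of a unique shortest path in $G$; a parade is a unique shortest path with $\mathrm{usp}(G)$ vertices. The spectator number is $\mathrm{sp}(G)=|V(G)|-\mathrm{usp}(G)$. The spectator floor $\lfloor \mathrm{sp}\rfloor(G)$ is the minimum of $\mathrm{sp}(H)$ over all graphs $H$ of which $G$ is a minor. For $p\geq2$, a crowded $p$-parade is a graph $G$ with a parade $P$ of $p$ vertices such that (i) every vertex outside $P$ is adjacent to exactly two vertices of $P$, and those two vertices are adjacent to each other; (ii) any two vertices outside $P$ that are adjacent to a common vertex of $P$ are adjacent to each other. An $m$-saturated crowded $p$-parade ($p\geq 2$) is a crowded $p$-parade in which every edge not in the parade has exactly $m$ parallel copies (including itself). A crowded $1$-parade is a graph whose simplification is complete; an $m$-saturated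 crowded $1$-parade is a graph in which every pair of vertices is joined by exactly $m$ edges. *)

theory Defs
  imports Main
begin

text \<open>Parallel edges
between a and b are the labelled edges (a,b,i) with i < mult a b; the
multiplicity function is symmetric, zero on the diagonal and outside the vertex set.\<close>

record mgraph =
  verts :: "nat set"
  mult :: "nat \<Rightarrow> nat \<Rightarrow> nat"

definition graph :: "mgraph \<Rightarrow> bool" where
  "graph G \<longleftrightarrow> finite (verts G) \<and> verts G \<noteq> {}
     \<and> (\<forall>a b. mult G a b = mult G b a) \<and> (\<forall>a. mult G a a = 0)
     \<and> (\<forall>a b. 0 < mult G a b \<longrightarrow> a \<in> verts G \<and> b \<in> verts G)"

definition adj :: "mgraph \<Rightarrow> nat \<Rightarrow> nat \<Rightarrow> bool" where
  "adj G a b \<longleftrightarrow> 0 < mult G a b"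

definition del_vertex :: "mgraph \<Rightarrow> nat \<Rightarrow> mgraph" where
  "del_vertex G v = G\<lparr>verts := verts G - {v}\<rparr>"

definition del_edge :: "mgraph \<Rightarrow> nat \<Rightarrow> nat \<Rightarrow> mgraph" where
  "del_edge G x y = G\<lparr>mult := (\<lambda>a b. if (a = x \<and> b = y) \<or> (a = y \<and> b = x)
                                     then mult G a b - 1 else mult G a b)\<rparr>"

definition contract :: "mgraph \<Rightarrow> nat \<Rightarrow> nat \<Rightarrow> mgraph" where
  "contract G x y = \<lparr>verts = verts G - {y},
     mult = (\<lambda>a b. if a = y \<or> b = y \<or> a = b then 0
                   else if a = x then mult G x b + mult G y b
                   else if b = x then mult G a x + mult G a y
                   else mult G a b)\<rparr>"

text \<open>minor_step G H: H arises from G by one minor operation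
 (the result must again be a graph, i.e. keep at least one vertex).\<close>
definition minor_step :: "mgraph \<Rightarrow> mgraph \<Rightarrow> bool" where
  "minor_step G H \<longleftrightarrow>
     (\<exists>v \<in> verts G. (\<forall>b. mult G v b = 0) \<and> 2 \<le> card (verts G) \<and> H = del_vertex G v)
   \<or> (\<exists>x y. 0 < mult G x y \<and> H = del_edge G x y)
   \<or> (\<exists>x y. mult G x y = 1 \<and> H = contract G x y)"

definition iso :: "mgraph \<Rightarrow> mgraph \<Rightarrow> bool" where
  "iso G H \<longleftrightarrow> (\<exists>f. bij_betw f (verts G) (verts H)
      \<and> (\<forall>a \<in> verts G. \<forall>b \<in> verts G. mult H (f a) (f b) = mult G a b))"

definition is_minor :: "mgraph \<Rightarrow> mgraph \<Rightarrow> bool" where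
  "is_minor G H \<longleftrightarrow> (\<exists>G'. minor_step\<^sup>*\<^sup>* H G' \<and> iso G' G)"

definition is_path :: "mgraph \<Rightarrow> nat \<Rightarrow> nat \<Rightarrow> nat list \<Rightarrow> nat list \<Rightarrow> bool" where
  "is_path G u v vs es \<longleftrightarrow> vs \<noteq> [] \<and> distinct vs \<and> set vs \<subseteq> verts G
     \<and> hd vs = u \<and> last vs = v \<and> length es = length vs - 1
     \<and> (\<forall>i < length es. es ! i < mult G (vs ! i) (vs ! Suc i))"

definition shortest_path :: "mgraph \<Rightarrow> nat list \<Rightarrow> nat list \<Rightarrow> bool" where
  "shortest_path G vs es \<longleftrightarrow> is_path G (hd vs) (last vs) vs es
     \<and> (\<forall>vs' es'. is_path G (hd vs) (last vs) vs' es' \<longrightarrow> length vs \<le> length vs')"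

definition unique_shortest_path :: "mgraph \<Rightarrow> nat list \<Rightarrow> nat list \<Rightarrow> bool" where
  "unique_shortest_path G vs es \<longleftrightarrow> shortest_path G vs es
     \<and> (\<forall>vs' es'. is_path G (hd vs) (last vs) vs' es' \<and> length vs' = length vs
           \<longrightarrow> vs' = vs \<and> es' = es)"

definition usp :: "mgraph \<Rightarrow> nat" where
  "usp G = Max {length vs | vs es. unique_shortest_path G vs es}"

definition parade :: "mgraph \<Rightarrow> nat list \<Rightarrow> nat list \<Rightarrow> bool" where
  "parade G vs es \<longleftrightarrow> unique_shortest_path G vs es \<and> length vs = usp G"

definition sp :: "mgraph \<Rightarrow> nat" where
  "sp G = card (verts G) - usp G"

definition sp_floor :: "mgraph \<Rightarrow> nat" where
  "sp_floor G = Inf {sp H | H. graph H \<and> is_minor G H}"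

definition minor_maximal :: "(mgraph \<Rightarrow> bool) \<Rightarrow> mgraph \<Rightarrow> bool" where
  "minor_maximal C G \<longleftrightarrow> C G \<and> (\<forall>H. C H \<and> is_minor G H \<longrightarrow> iso H G)"

definition graph_class :: "nat \<Rightarrow> nat \<Rightarrow> nat \<Rightarrow> mgraph \<Rightarrow> bool" where
  "graph_class n m k H \<longleftrightarrow> graph H \<and> card (verts H) = n
     \<and> (\<forall>a b. mult H a b \<le> m) \<and> sp_floor H = k"

definition crowded_parade :: "mgraph \<Rightarrow> nat \<Rightarrow> nat list \<Rightarrow> nat list \<Rightarrow> bool" where
  "crowded_parade G p vs es \<longleftrightarrow> 2 \<le> p \<and> parade G vs es \<and> length vs = p
     \<and> (\<forall>w \<in> verts G - set vs. \<exists>a b. a \<noteq> b \<and> {x \<in> set vs. adj G w x} = {a, b} \<and> adj G a b)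
     \<and> (\<forall>w1 \<in> verts G - set vs. \<forall>w2 \<in> verts G - set vs.
          w1 \<noteq> w2 \<and> (\<exists>x \<in> set vs. adj G w1 x \<and> adj G w2 x) \<longrightarrow> adj G w1 w2)"

definition parade_edge :: "nat list \<Rightarrow> nat list \<Rightarrow> nat \<Rightarrow> nat \<Rightarrow> nat \<Rightarrow> bool" where
  "parade_edge vs es a b i \<longleftrightarrow> (\<exists>j < length es. es ! j = i
       \<and> ((vs ! j = a \<and> vs ! Suc j = b) \<or> (vs ! j = b \<and> vs ! Suc j = a)))"

definition saturated_crowded_parade :: "nat \<Rightarrow> nat \<Rightarrow> mgraph \<Rightarrow> bool" where
  "saturated_crowded_parade m p G \<longleftrightarrow>
     (if p = 1 then (\<forall>a \<in> verts G. \<forall>b \<in> verts G. a \<noteq> b \<longrightarrow> mult G a b = m)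
      else (\<exists>vs es. crowded_parade G p vs es
              \<and> (\<forall>a b i. i < mult G a b \<and> \<not> parade_edge vs es a b i \<longrightarrow> mult G a b = m)))"

end

(* Let H be a graph with minor G and sp H = k, and let vs be a parade of H, so vs has
   p = |H| - k vertices.  Give the i-th vertex of vs level 2 i + 1 and every other vertex
   twice its distance from the start of vs.  Levels then change by at most two along an
   edge, so a vertex off vs sees at most two consecutive vertices of vs, and vs is induced
   with simple edges.  This parade layout survives every minor operation at the cost of at
   most one path vertex per lost vertex, hence G carries a layout whose path has at least
   n - k vertices.  Adding every edge the levels permit, m-fold off the path, yields a graph
   on the vertices of G containing G in which the path is a unique shortest path: its
   spectator number is at most k, and since every graph with it as a minor also has G as a
   minor, its spectator floor is k.  Maximality of G makes the two graphs equal.  For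
   k = n - 1 the complete m-multigraph plays the same role. *)

theory Submission
  imports Defs
begin

lemma graph_finite: "graph K \<Longrightarrow> finite (verts K)"
  unfolding graph_def by blast

lemma graph_mult_sym: "graph K \<Longrightarrow> mult K a b = mult K b a"
  unfolding graph_def by blast

lemma graph_mult_diag [simp]: "graph K \<Longrightarrow> mult K a a = 0"
  unfolding graph_def by blast

lemma graph_mult_pos_verts: "graph K \<Longrightarrow> 0 < mult K a b \<Longrightarrow> a \<in> verts K \<and> b \<in> verts K"
  unfolding graph_def by blast

lemma graph_mult_outside: "graph K \<Longrightarrow> a \<notin> verts K \<or> b \<notin> verts K \<Longrightarrow> mult K a b = 0"
  unfolding graph_def by (meson neq0_conv)

lemma mgraph_eqI:
  assumes "graph G" "graph G'" "verts G = verts G'"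
    and "\<And>a b. a \<in> verts G \<Longrightarrow> b \<in> verts G \<Longrightarrow> mult G a b = mult G' a b"
  shows "G = G'"
proof -
  have "mult G a b = mult G' a b" for a b
    using assms graph_mult_outside[OF assms(1), of a b] graph_mult_outside[OF assms(2), of a b]
    by (cases "a \<in> verts G \<and> b \<in> verts G") auto
  then show ?thesis
    using assms(3) by (cases G, cases G') auto
qed

lemma contract_verts [simp]: "verts (contract K x y) = verts K - {y}"
  by (simp add: contract_def)

lemma contract_mult_left:
  "x \<noteq> y \<Longrightarrow> b \<noteq> x \<Longrightarrow> b \<noteq> y \<Longrightarrow> mult (contract K x y) x b = mult K x b + mult K y b"
  by (simp add: contract_def)

lemma contract_mult_right:
  "x \<noteq> y \<Longrightarrow> a \<noteq> x \<Longrightarrow> a \<noteq> y \<Longrightarrow> mult (contract K x y) a x = mult K a x + mult K a y"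
  by (simp add: contract_def)

lemma contract_mult_other:
  "graph K \<Longrightarrow> a \<noteq> x \<Longrightarrow> a \<noteq> y \<Longrightarrow> b \<noteq> x \<Longrightarrow> b \<noteq> y
    \<Longrightarrow> mult (contract K x y) a b = mult K a b"
  by (cases "a = b") (simp_all add: contract_def)

lemma contract_mult_deleted: "a = y \<or> b = y \<or> a = b \<Longrightarrow> mult (contract K x y) a b = 0"
  by (auto simp add: contract_def)

lemma graph_contract:
  assumes g: "graph K" and xy: "mult K x y = 1"
  shows "graph (contract K x y)"
proof -
  have x: "x \<in> verts K" and "x \<noteq> y"
    using graph_mult_pos_verts[OF g, of x y] xy g by auto
  have "finite (verts (contract K x y))" "verts (contract K x y) \<noteq> {}"
    using graph_finite[OF g] x \<open>x \<noteq> y\<close> by auto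
  moreover have "\<forall>a b. mult (contract K x y) a b = mult (contract K x y) b a"
    using graph_mult_sym[OF g] by (auto simp add: contract_def add.commute)
  moreover have "\<forall>a. mult (contract K x y) a a = 0"
    by (simp add: contract_def)
  moreover have "0 < mult (contract K x y) a b \<Longrightarrow> a \<in> verts K \<and> b \<in> verts K" for a b
    using graph_mult_pos_verts[OF g, of a b] graph_mult_pos_verts[OF g, of x b]
      graph_mult_pos_verts[OF g, of y b] graph_mult_pos_verts[OF g, of a y] x
    by (auto simp: contract_def split: if_splits)
  then have "\<forall>a b. 0 < mult (contract K x y) a b
      \<longrightarrow> a \<in> verts (contract K x y) \<and> b \<in> verts (contract K x y)"
    by (auto simp: contract_def split: if_splits)
  ultimately show ?thesis
    unfolding graph_def by blast
qed

lemma minor_step_graph: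
  assumes g: "graph K" and st: "minor_step K K'"
  shows "graph K'"
  using st unfolding minor_step_def
proof (elim disjE exE conjE bexE)
  fix v assume v: "v \<in> verts K" "2 \<le> card (verts K)" "K' = del_vertex K v"
    and isolated: "\<forall>b. mult K v b = 0"
  have "verts K \<noteq> {v}"
    using v(2) by auto
  then have "verts K - {v} \<noteq> {}"
    using v(1) by blast
  with g v(3) isolated show ?thesis
    unfolding graph_def del_vertex_def by (simp, metis gr_implies_not0)
next
  fix x y assume "0 < mult K x y" "K' = del_edge K x y"
  with g graph_mult_pos_verts[OF g, of x y] show ?thesis
    unfolding graph_def del_edge_def by auto
next
  fix x y assume "mult K x y = 1" "K' = contract K x y"
  with g show ?thesis
    by (simp add: graph_contract)
qed

lemma minor_steps_graph: "minor_step\<^sup>*\<^sup>* H K \<Longrightarrow> graph H \<Longrightarrow> graph K"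
  by (induction rule: rtranclp_induct) (auto intro: minor_step_graph)

lemma iso_refl: "iso K K"
  unfolding iso_def by (rule exI[of _ id]) auto

lemma is_minor_refl: "is_minor K K"
  unfolding is_minor_def using iso_refl by blast

lemma is_path_take:
  assumes "is_path K u v vs es" "t < length vs"
  shows "is_path K u (vs ! t) (take (Suc t) vs) (take t es)"
proof -
  have "length vs \<le> Suc t \<Longrightarrow> length vs - 1 = t"
    using assms(2) by arith
  then show ?thesis
    using assms set_take_subset[of "Suc t" vs] unfolding is_path_def
    by (auto simp: hd_take last_conv_nth min_def)
qed

lemma is_path_drop:
  assumes "is_path K u v vs es" "t < length vs"
  shows "is_path K (vs ! t) v (drop t vs) (drop t es)"
  using assms set_drop_subset[of t vs] unfolding is_path_def
  by (auto simp: hd_drop_conv_nth)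

lemma is_path_edge:
  "a \<noteq> b \<Longrightarrow> a \<in> verts K \<Longrightarrow> b \<in> verts K \<Longrightarrow> l < mult K a b \<Longrightarrow> is_path K a b [a, b] [l]"
  unfolding is_path_def by auto

lemma is_path_mult_pos:
  assumes "is_path K u v vs es" "Suc i < length vs"
  shows "es ! i < mult K (vs ! i) (vs ! Suc i)"
  using assms unfolding is_path_def by auto

lemma nth_append_tl:
  assumes "xs \<noteq> []" "ys \<noteq> []" "last xs = hd ys"
    and "length xs - 1 \<le> i" "i < length xs + length ys - 1"
  shows "(xs @ tl ys) ! i = ys ! (i - (length xs - 1))"
proof (cases "i < length xs")
  case True
  then have "i = length xs - 1"
    using assms(4) by simp
  moreover have "xs ! (length xs - 1) = ys ! 0"
    using assms(1-3) by (simp add: last_conv_nth hd_conv_nth)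
  ultimately show ?thesis
    using True by (simp add: nth_append)
next
  case False
  then have "i - (length xs - 1) = Suc (i - length xs)"
    using assms(1) by (cases xs) auto
  moreover obtain y yt where "ys = y # yt"
    using assms(2) by (cases ys) auto
  ultimately show ?thesis
    using False by (simp add: nth_append)
qed

lemma is_path_append:
  assumes P1: "is_path K u v xs ex" and P2: "is_path K v z ys ey" and I: "set xs \<inter> set ys = {v}"
  shows "is_path K u z (xs @ tl ys) (ex @ ey)"
proof -
  have xs: "xs \<noteq> []" "distinct xs" "set xs \<subseteq> verts K" "hd xs = u" "last xs = v"
    "length ex = length xs - 1" "\<And>i. i < length ex \<Longrightarrow> ex ! i < mult K (xs ! i) (xs ! Suc i)"
    using P1 unfolding is_path_def by auto
  have ys: "ys \<noteq> []" "distinct ys" "set ys \<subseteq> verts K" "hd ys = v" "last ys = z"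
    "length ey = length ys - 1" "\<And>i. i < length ey \<Longrightarrow> ey ! i < mult K (ys ! i) (ys ! Suc i)"
    using P2 unfolding is_path_def by auto
  obtain yt where yd: "ys = v # yt"
    using ys(1,4) by (cases ys) auto
  have shift: "(xs @ yt) ! j = ys ! (j - (length xs - 1))"
    if "length xs - 1 \<le> j" "j < length xs + length yt" for j
  proof -
    have "(xs @ tl ys) ! j = ys ! (j - (length xs - 1))"
      by (rule nth_append_tl) (use xs(1,5) ys(1,4) that yd in simp_all)
    then show ?thesis
      using yd by simp
  qed
  show ?thesis
    unfolding is_path_def yd list.sel
  proof (intro conjI allI impI)
    show "xs @ yt \<noteq> []" "hd (xs @ yt) = u"
      using xs(1,4) by simp_all
    show "distinct (xs @ yt)" "set (xs @ yt) \<subseteq> verts K"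
      using xs(2,3) ys(2,3) I yd by auto
    show "last (xs @ yt) = z"
      using xs(5) ys(5) yd by (cases "yt = []") auto
    show "length (ex @ ey) = length (xs @ yt) - 1"
      using xs(1,6) ys(6) yd by (cases xs) auto
    fix i assume i: "i < length (ex @ ey)"
    show "(ex @ ey) ! i < mult K ((xs @ yt) ! i) ((xs @ yt) ! Suc i)"
    proof (cases "i < length ex")
      case True
      moreover have "Suc i < length xs"
        using True xs(6) by simp
      ultimately show ?thesis
        using xs(7) by (simp add: nth_append)
    next
      case False
      let ?r = "i - length ex"
      have "?r < length ey" "Suc i < length xs + length yt"
        using i False xs(1,6) ys(6) yd by (cases xs; auto)+
      moreover have "(xs @ yt) ! i = ys ! ?r" "(xs @ yt) ! Suc i = ys ! Suc ?r"
        using shift[of i] shift[of "Suc i"] False xs(6) i ys(6) yd calculation(2)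
        by (simp_all add: Suc_diff_le)
      ultimately show ?thesis
        using ys(7) False by (simp add: nth_append)
    qed
  qed
qed

text \<open>Cut a at its first vertex on c.\<close>
lemma is_path_concat:
  assumes P: "is_path K u x a b" and Q: "is_path K x z c d"
  shows "\<exists>a' b'. is_path K u z a' b' \<and> length a' < length a + length c"
proof -
  define A where "A = {s. s < length a \<and> a ! s \<in> set c}"
  have "a \<noteq> []" "last a = x" "c \<noteq> []" "hd c = x"
    using P Q unfolding is_path_def by auto
  then have "length a - 1 \<in> A"
    using hd_in_set[of c] unfolding A_def by (simp add: last_conv_nth)
  then have s0: "Least (\<lambda>s. s \<in> A) \<in> A"
    by (rule LeastI)
  define s0 where "s0 = Least (\<lambda>s. s \<in> A)"
  have first: "a ! s \<notin> set c" if "s < s0" for s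
    using not_less_Least[OF that[unfolded s0_def]] that s0 unfolding A_def s0_def by auto
  obtain l where l: "l < length c" "c ! l = a ! s0"
    using s0 unfolding A_def s0_def by (auto simp: in_set_conv_nth)
  have s0a: "s0 < length a"
    using s0 unfolding A_def s0_def by simp
  have X: "is_path K u (a ! s0) (take (Suc s0) a) (take s0 b)"
    by (rule is_path_take[OF P s0a])
  have Y: "is_path K (a ! s0) z (drop l c) (drop l d)"
    using is_path_drop[OF Q l(1)] l(2) by simp
  have "set (take (Suc s0) a) \<inter> set (drop l c) \<subseteq> {a ! s0}"
  proof
    fix y assume y: "y \<in> set (take (Suc s0) a) \<inter> set (drop l c)"
    then obtain s where "s \<le> s0" "y = a ! s"
      by (auto simp: in_set_conv_nth less_Suc_eq_le)
    moreover have "y \<in> set c"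
      using y set_drop_subset[of l c] by auto
    ultimately show "y \<in> {a ! s0}"
      using first[of s] by (cases "s < s0") auto
  qed
  moreover have "a ! s0 \<in> set (take (Suc s0) a)" "a ! s0 \<in> set (drop l c)"
    using nth_mem[of s0 "take (Suc s0) a"] nth_mem[of 0 "drop l c"] s0a l by simp_all
  ultimately have "set (take (Suc s0) a) \<inter> set (drop l c) = {a ! s0}"
    by blast
  from is_path_append[OF X Y this] show ?thesis
    using s0a l(1) by (intro exI conjI) auto
qed

lemma is_path_length_le_card:
  assumes "graph K" "is_path K u v vs es"
  shows "length vs \<le> card (verts K)"
proof -
  have "distinct vs" "set vs \<subseteq> verts K"
    using assms(2) unfolding is_path_def by auto
  then show ?thesis
    using graph_finite[OF assms(1)] by (metis card_mono distinct_card)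
qed

lemma finite_usp_lengths:
  assumes "graph K"
  shows "finite {length vs | vs es. unique_shortest_path K vs es}"
proof (rule finite_subset)
  show "{length vs | vs es. unique_shortest_path K vs es} \<subseteq> {..card (verts K)}"
    using is_path_length_le_card[OF assms]
    unfolding unique_shortest_path_def shortest_path_def by auto
qed simp

lemma unique_shortest_path_singleton:
  assumes "v \<in> verts K"
  shows "unique_shortest_path K [v] []"
  unfolding unique_shortest_path_def shortest_path_def
proof (intro conjI allI impI)
  show "is_path K (hd [v]) (last [v]) [v] []"
    using assms unfolding is_path_def by auto
  fix vs' :: "nat list" and es' :: "nat list"
  show "is_path K (hd [v]) (last [v]) vs' es' \<Longrightarrow> length [v] \<le> length vs'"
    unfolding is_path_def by (cases vs') auto
  assume a: "is_path K (hd [v]) (last [v]) vs' es' \<and> length vs' = length [v]"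
  then obtain x where "vs' = [x]"
    by (cases vs') auto
  then show "vs' = [v]" "es' = []"
    using a unfolding is_path_def by auto
qed

lemma length_le_usp:
  assumes "graph K" "unique_shortest_path K vs es"
  shows "length vs \<le> usp K"
  unfolding usp_def using finite_usp_lengths[OF assms(1)] assms(2) by (auto intro: Max_ge)

lemma usp_attained:
  assumes "graph K"
  obtains vs es where "unique_shortest_path K vs es" "length vs = usp K"
proof -
  obtain v where "v \<in> verts K"
    using assms unfolding graph_def by auto
  then have "{length vs | vs es. unique_shortest_path K vs es} \<noteq> {}"
    using unique_shortest_path_singleton by blast
  then have "usp K \<in> {length vs | vs es. unique_shortest_path K vs es}"
    unfolding usp_def using Max_in finite_usp_lengths[OF assms] by blast
  then show ?thesis
    using that by auto
qed

lemma usp_le_card: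
  assumes "graph K"
  shows "usp K \<le> card (verts K)"
  using usp_attained[OF assms] is_path_length_le_card[OF assms]
  unfolding unique_shortest_path_def shortest_path_def by metis

lemma usp_pos:
  assumes "graph K"
  shows "0 < usp K"
proof -
  obtain v where "v \<in> verts K"
    using assms unfolding graph_def by auto
  from length_le_usp[OF assms unique_shortest_path_singleton[OF this]] show ?thesis
    by simp
qed

lemma sp_floor_le_sp: "graph H \<Longrightarrow> is_minor G H \<Longrightarrow> sp_floor G \<le> sp H"
  unfolding sp_floor_def by (rule cInf_lower) auto

lemma sp_floor_attained:
  assumes "graph G"
  obtains H where "graph H" "is_minor G H" "sp H = sp_floor G"
proof -
  have "{sp H | H. graph H \<and> is_minor G H} \<noteq> {}"
    using assms is_minor_refl by blast
  from Inf_nat_def1[OF this] show ?thesis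
    using that unfolding sp_floor_def by auto
qed

lemma sp_floor_greatest:
  assumes "graph G" "\<And>H. graph H \<Longrightarrow> is_minor G H \<Longrightarrow> k \<le> sp H"
  shows "k \<le> sp_floor G"
  unfolding sp_floor_def by (rule cInf_greatest) (use assms is_minor_refl in auto)

definition spanning_subgraph :: "mgraph \<Rightarrow> mgraph \<Rightarrow> bool" where
  "spanning_subgraph G G' \<longleftrightarrow> verts G = verts G' \<and> (\<forall>a b. mult G a b \<le> mult G' a b)"

definition mult_total :: "mgraph \<Rightarrow> nat" where
  "mult_total K = (\<Sum>(a, b) \<in> verts K \<times> verts K. mult K a b)"

lemma spanning_subgraph_mult_total_less:
  assumes g: "graph G" "graph G'" and S: "spanning_subgraph G G'" and ne: "G \<noteq> G'"
  shows "mult_total G < mult_total G'"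
proof -
  obtain a b where ab: "a \<in> verts G" "b \<in> verts G" "mult G a b < mult G' a b"
    using S ne mgraph_eqI[OF g] unfolding spanning_subgraph_def by (meson le_neq_implies_less)
  have "(\<Sum>(a, b) \<in> verts G \<times> verts G. mult G a b) < (\<Sum>(a, b) \<in> verts G \<times> verts G. mult G' a b)"
    by (rule sum_strict_mono_ex1) (use graph_finite[OF g(1)] S ab in \<open>auto simp: spanning_subgraph_def\<close>)
  then show ?thesis
    using S unfolding mult_total_def spanning_subgraph_def by simp
qed

lemma iso_mult_total:
  assumes "iso G H"
  shows "mult_total G = mult_total H"
proof -
  obtain f where f: "bij_betw f (verts G) (verts H)"
    and m: "\<forall>a \<in> verts G. \<forall>b \<in> verts G. mult H (f a) (f b) = mult G a b"
    using assms unfolding iso_def by blast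
  have "mult_total H = (\<Sum>x \<in> verts G \<times> verts G. case_prod (mult H) (map_prod f f x))"
    unfolding mult_total_def using sum.reindex_bij_betw[OF bij_betw_map_prod[OF f f]] by metis
  also have "\<dots> = mult_total G"
    unfolding mult_total_def using m by (intro sum.cong) auto
  finally show ?thesis ..
qed

lemma spanning_subgraph_iso_eq:
  assumes "graph G" "graph G'" "spanning_subgraph G G'" "iso G' G"
  shows "G' = G"
  using spanning_subgraph_mult_total_less[OF assms(1-3)] iso_mult_total[OF assms(4)] by fastforce

lemma spanning_subgraph_minor_steps:
  assumes "graph G" "graph G'" "spanning_subgraph G G'"
  shows "minor_step\<^sup>*\<^sup>* G' G"
  using assms
proof (induction "mult_total G'" arbitrary: G' rule: less_induct)
  case less
  note gG = less.prems(1) and gG' = less.prems(2) and S = less.prems(3)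
  show ?case
  proof (cases "G' = G")
    case False
    then obtain a b where "mult G a b \<noteq> mult G' a b"
      using S mgraph_eqI[OF gG gG'] unfolding spanning_subgraph_def by blast
    then have ab: "mult G a b < mult G' a b"
      using S unfolding spanning_subgraph_def by (meson le_neq_implies_less)
    then have "0 < mult G' a b"
      by simp
    then have st: "minor_step G' (del_edge G' a b)"
      unfolding minor_step_def by blast
    have "mult G b a < mult G' b a"
      using ab graph_mult_sym[OF gG] graph_mult_sym[OF gG'] by metis
    then have S': "spanning_subgraph G (del_edge G' a b)"
      using S ab unfolding spanning_subgraph_def del_edge_def by (auto simp: less_diff_conv)
    have "mult (del_edge G' a b) a b \<noteq> mult G' a b"
      using ab by (simp add: del_edge_def)
    then have "del_edge G' a b \<noteq> G'"
      by metis
    moreover have "spanning_subgraph (del_edge G' a b) G'"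
      unfolding spanning_subgraph_def del_edge_def by auto
    ultimately have "mult_total (del_edge G' a b) < mult_total G'"
      using spanning_subgraph_mult_total_less minor_step_graph[OF gG' st] gG' by blast
    with less.hyps[OF _ gG minor_step_graph[OF gG' st] S'] st show ?thesis
      by (meson converse_rtranclp_into_rtranclp)
  qed simp
qed

lemma spanning_subgraph_is_minor:
  "graph G \<Longrightarrow> graph G' \<Longrightarrow> spanning_subgraph G G' \<Longrightarrow> is_minor G G'"
  unfolding is_minor_def using spanning_subgraph_minor_steps iso_refl by blast

lemma iso_spanning_subgraph:
  assumes gG: "graph G" and S: "spanning_subgraph G G'" and g: "graph K" and "iso K G'"
  obtains K' where "graph K'" "spanning_subgraph K' K" "iso K' G"
proof -
  obtain f where f: "bij_betw f (verts K) (verts G')"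
    and m: "\<forall>a \<in> verts K. \<forall>b \<in> verts K. mult G' (f a) (f b) = mult K a b"
    using \<open>iso K G'\<close> unfolding iso_def by blast
  define K' where "K' = \<lparr>verts = verts K,
    mult = (\<lambda>a b. if a \<in> verts K \<and> b \<in> verts K then mult G (f a) (f b) else 0)\<rparr>"
  have "graph K'"
    unfolding graph_def
  proof (intro conjI allI impI)
    show "finite (verts K')" "verts K' \<noteq> {}"
      using g unfolding K'_def graph_def by simp_all
    show "mult K' a b = mult K' b a" for a b
      unfolding K'_def using graph_mult_sym[OF gG, of "f a" "f b"] by auto
    show "mult K' a a = 0" for a
      unfolding K'_def using gG by auto
    show "a \<in> verts K'" "b \<in> verts K'" if "0 < mult K' a b" for a b
      using that unfolding K'_def by (simp_all split: if_splits)
  qed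
  moreover have "mult K' a b \<le> mult K a b" for a b
  proof (cases "a \<in> verts K \<and> b \<in> verts K")
    case True
    then have "mult K' a b = mult G (f a) (f b)"
      by (simp add: K'_def)
    also have "\<dots> \<le> mult G' (f a) (f b)"
      using S unfolding spanning_subgraph_def by blast
    also have "\<dots> = mult K a b"
      using m True by blast
    finally show ?thesis .
  qed (auto simp: K'_def)
  then have "spanning_subgraph K' K"
    unfolding spanning_subgraph_def by (simp add: K'_def)
  moreover have "iso K' G"
    unfolding iso_def K'_def using f S unfolding spanning_subgraph_def by (intro exI[of _ f]) auto
  ultimately show ?thesis
    by (rule that)
qed

lemma is_minor_spanning_subgraph:
  assumes gG: "graph G" and S: "spanning_subgraph G G'" and gH: "graph H" and M: "is_minor G' H"
  shows "is_minor G H"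
proof -
  obtain K where s: "minor_step\<^sup>*\<^sup>* H K" and "iso K G'"
    using M unfolding is_minor_def by blast
  moreover have gK: "graph K"
    using minor_steps_graph[OF s gH] .
  ultimately obtain K' where "graph K'" "spanning_subgraph K' K" "iso K' G"
    using iso_spanning_subgraph[OF gG S] by blast
  then have "minor_step\<^sup>*\<^sup>* K K'" "iso K' G"
    using spanning_subgraph_minor_steps gK by blast+
  then show ?thesis
    unfolding is_minor_def using s by (meson rtranclp_trans)
qed

lemma sp_floor_spanning_subgraph:
  assumes "graph G" "graph G'" "spanning_subgraph G G'"
  shows "sp_floor G \<le> sp_floor G'"
  using assms is_minor_spanning_subgraph sp_floor_le_sp by (blast intro: sp_floor_greatest)

section \<open>Parade layouts\<close>

text \<open>Vertices off the path are spectators; one at level 2 i + 2 sees at most q i and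
  q (i + 1) on the path.\<close>
locale parade_layout =
  fixes K :: mgraph and p :: nat and q :: "nat \<Rightarrow> nat" and lvl :: "nat \<Rightarrow> nat"
  assumes layout_graph: "graph K"
    and path_in_verts: "i < p \<Longrightarrow> q i \<in> verts K"
    and lvl_path: "i < p \<Longrightarrow> lvl (q i) = 2 * i + 1"
    and lvl_spectator: "w \<in> verts K - q ` {..<p} \<Longrightarrow> even (lvl w) \<and> lvl w \<le> 2 * p"
    and lvl_edge: "0 < mult K a b \<Longrightarrow> lvl b \<le> lvl a + 2"
    and path_simple: "i < p \<Longrightarrow> j < p \<Longrightarrow> mult K (q i) (q j) \<le> 1"
begin

lemma lvl_edge': "0 < mult K a b \<Longrightarrow> lvl a \<le> lvl b + 2"
  using lvl_edge graph_mult_sym[OF layout_graph] by metis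

lemma path_eq_iff: "i < p \<Longrightarrow> j < p \<Longrightarrow> q i = q j \<longleftrightarrow> i = j"
  using lvl_path by (metis Suc_eq_plus1 Suc_inject mult_left_cancel zero_neq_numeral)

lemma inj_on_path: "inj_on q {..<p}"
  using path_eq_iff by (auto simp: inj_on_def)

lemma lvl_odd_path:
  assumes "w \<in> verts K" "lvl w = 2 * i + 1"
  shows "i < p \<and> w = q i"
proof (cases "w \<in> q ` {..<p}")
  case True
  then obtain j where "j < p" "w = q j"
    by auto
  then show ?thesis
    using assms(2) lvl_path by auto
next
  case False
  then show ?thesis
    using assms lvl_spectator[of w] by auto
qed

lemma lvl_odd_iff: "w \<in> verts K \<Longrightarrow> odd (lvl w) \<longleftrightarrow> w \<in> q ` {..<p}"
  using lvl_path lvl_spectator by auto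

lemma path_length_le_card: "p \<le> card (verts K)"
proof -
  have "q ` {..<p} \<subseteq> verts K"
    using path_in_verts by auto
  then have "card (q ` {..<p}) \<le> card (verts K)"
    by (rule card_mono[OF graph_finite[OF layout_graph]])
  then show ?thesis
    using card_image[OF inj_on_path] by simp
qed

lemma path_adj:
  assumes "i < p" "j < p" "0 < mult K (q i) (q j)"
  shows "i = Suc j \<or> j = Suc i"
proof -
  have "i \<noteq> j"
    using assms(3) layout_graph by auto
  then show ?thesis
    using lvl_edge[OF assms(3)] lvl_edge'[OF assms(3)] lvl_path assms(1,2) by auto
qed

lemma lvl_spectator_path:
  assumes "w \<in> verts K - q ` {..<p}" "j < p" "0 < mult K w (q j)"
  shows "lvl w = 2 * j \<or> lvl w = 2 * j + 2"
proof -
  have "even (lvl w)"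
    using lvl_spectator[OF assms(1)] by simp
  moreover have "2 * j + 1 \<le> lvl w + 2" "lvl w \<le> 2 * j + 1 + 2"
    using lvl_edge[OF assms(3)] lvl_edge'[OF assms(3)] lvl_path[OF assms(2)] by simp_all
  ultimately show ?thesis
    by presburger
qed

lemma lvl_along_path:
  assumes P: "is_path K u v vs es" and "r \<le> s" "s < length vs"
  shows "lvl (vs ! s) \<le> lvl (vs ! r) + 2 * (s - r)"
  using assms(2,3)
proof (induction s)
  case (Suc s)
  show ?case
  proof (cases "r = Suc s")
    case False
    then have "r \<le> s" "s < length vs"
      using Suc.prems by auto
    moreover have "0 < mult K (vs ! s) (vs ! Suc s)"
      using is_path_mult_pos[OF P Suc.prems(2)] by simp
    ultimately show ?thesis
      using Suc.IH lvl_edge[of "vs ! s" "vs ! Suc s"] by simp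
  qed simp
qed simp

lemma path_length_ge:
  assumes "is_path K (q 0) (q (p - 1)) xs ys" "0 < p"
  shows "p \<le> length xs"
proof -
  have "xs \<noteq> []" "xs ! 0 = q 0" "xs ! (length xs - 1) = q (p - 1)"
    using assms(1) unfolding is_path_def by (auto simp: hd_conv_nth last_conv_nth)
  then have "p - 1 \<le> length xs - 1"
    using lvl_along_path[OF assms(1), of 0 "length xs - 1"] lvl_path assms(2) by simp
  then show ?thesis
    using \<open>xs \<noteq> []\<close> assms(2) by (cases xs) auto
qed

text \<open>A path of exactly p vertices has to climb two levels per step, so it never
  visits a spectator.\<close>
lemma path_length_eq:
  assumes P: "is_path K (q 0) (q (p - 1)) xs ys" and len: "length xs = p" and "t < p"
  shows "xs ! t = q t"
  using assms(3)
proof (induction t)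
  case 0
  then show ?case
    using P unfolding is_path_def by (metis hd_conv_nth)
next
  case (Suc t)
  have last: "xs ! (p - 1) = q (p - 1)"
    using P len unfolding is_path_def by (auto simp: last_conv_nth)
  have "lvl (xs ! Suc t) \<le> lvl (xs ! t) + 2"
    using lvl_along_path[OF P, of t "Suc t"] Suc.prems len by simp
  moreover have "lvl (xs ! (p - 1)) \<le> lvl (xs ! Suc t) + 2 * (p - 1 - Suc t)"
    using lvl_along_path[OF P, of "Suc t" "p - 1"] Suc.prems len by simp
  ultimately have "lvl (xs ! Suc t) = 2 * Suc t + 1"
    using Suc lvl_path last by simp
  moreover have "xs ! Suc t \<in> verts K"
    using P Suc.prems len unfolding is_path_def by auto
  ultimately show ?case
    using lvl_odd_path by blast
qed

lemma unique_shortest_path_layout: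
  assumes p: "0 < p" and adj: "\<And>i. Suc i < p \<Longrightarrow> 0 < mult K (q i) (q (Suc i))"
  shows "unique_shortest_path K (map q [0..<p]) (replicate (p - 1) 0)"
  unfolding unique_shortest_path_def shortest_path_def
proof (intro conjI allI impI)
  let ?vs = "map q [0..<p]" and ?es = "replicate (p - 1) (0::nat)"
  have ends: "hd ?vs = q 0" "last ?vs = q (p - 1)"
    using p by (simp_all add: hd_map last_map)
  have "distinct ?vs"
    using inj_on_path by (simp add: distinct_map atLeast_upt)
  moreover have "set ?vs \<subseteq> verts K"
    using path_in_verts by auto
  moreover have "\<forall>i < length ?es. ?es ! i < mult K (?vs ! i) (?vs ! Suc i)"
    using adj by simp
  ultimately show "is_path K (hd ?vs) (last ?vs) ?vs ?es"
    using p unfolding is_path_def by simp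
  fix xs ys
  show "is_path K (hd ?vs) (last ?vs) xs ys \<Longrightarrow> length ?vs \<le> length xs"
    using path_length_ge p unfolding ends by simp
  assume "is_path K (hd ?vs) (last ?vs) xs ys \<and> length xs = length ?vs"
  then have P: "is_path K (q 0) (q (p - 1)) xs ys" and len: "length xs = p"
    unfolding ends by simp_all
  show xs: "xs = ?vs"
    using path_length_eq[OF P len] len by (intro nth_equalityI) auto
  have "ys ! i < 1" if "i < p - 1" for i
  proof -
    have "ys ! i < mult K (xs ! i) (xs ! Suc i)"
      using is_path_mult_pos[OF P, of i] that len by simp
    also have "\<dots> \<le> 1"
      using path_simple[of i "Suc i"] that xs by simp
    finally show ?thesis .
  qed
  then show "ys = ?es"
    using P len unfolding is_path_def by (intro nth_equalityI) auto
qed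

end

section \<open>Parade layouts under minor operations\<close>

definition del_index :: "(nat \<Rightarrow> nat) \<Rightarrow> nat \<Rightarrow> nat \<Rightarrow> nat" where
  "del_index q j i = (if i < j then q i else q (Suc i))"

definition demote_lvl :: "nat \<Rightarrow> nat \<Rightarrow> nat" where
  "demote_lvl j l = (if l \<le> 2 * j then l else if l \<le> 2 * j + 2 then 2 * j else l - 2)"

lemma demote_lvl_le: "l' \<le> l + 2 \<Longrightarrow> demote_lvl j l' \<le> demote_lvl j l + 2"
  unfolding demote_lvl_def by auto

lemma demote_lvl_spectator:
  "even l \<Longrightarrow> l \<le> 2 * p \<Longrightarrow> j < p \<Longrightarrow> even (demote_lvl j l) \<and> demote_lvl j l \<le> 2 * (p - 1)"
  unfolding demote_lvl_def by (auto; presburger)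

lemma del_index_image:
  assumes "j < p"
  shows "del_index q j ` {..<p - 1} = q ` ({..<p} - {j})"
proof
  show "del_index q j ` {..<p - 1} \<subseteq> q ` ({..<p} - {j})"
    unfolding del_index_def using assms by (auto simp: image_iff)
  show "q ` ({..<p} - {j}) \<subseteq> del_index q j ` {..<p - 1}"
  proof
    fix x assume "x \<in> q ` ({..<p} - {j})"
    then obtain i where i: "i < p" "i \<noteq> j" "x = q i"
      by auto
    then have "x = del_index q j (if i < j then i else i - 1)" "(if i < j then i else i - 1) < p - 1"
      using assms by (auto simp: del_index_def)
    then show "x \<in> del_index q j ` {..<p - 1}"
      by blast
  qed
qed

context parade_layout
begin

lemma spectators_del_index:
  assumes "j < p"
  shows "verts K - del_index q j ` {..<p - 1} = insert (q j) (verts K - q ` {..<p})"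
  unfolding del_index_image[OF assms] using assms path_in_verts path_eq_iff by auto

lemma layout_demote:
  assumes j: "j < p"
  shows "parade_layout K (p - 1) (del_index q j) (demote_lvl j \<circ> lvl)"
proof
  show "graph K"
    by (rule layout_graph)
  show "del_index q j i \<in> verts K" if "i < p - 1" for i
    using that path_in_verts by (simp add: del_index_def)
  show "(demote_lvl j \<circ> lvl) (del_index q j i) = 2 * i + 1" if "i < p - 1" for i
    using that lvl_path by (auto simp: del_index_def demote_lvl_def)
  show "even ((demote_lvl j \<circ> lvl) w) \<and> (demote_lvl j \<circ> lvl) w \<le> 2 * (p - 1)"
    if "w \<in> verts K - del_index q j ` {..<p - 1}" for w
  proof (cases "w = q j")
    case True
    then show ?thesis
      using lvl_path[OF j] j by (simp add: demote_lvl_def)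
  next
    case False
    then have "w \<in> verts K - q ` {..<p}"
      using that spectators_del_index[OF j] by blast
    then show ?thesis
      using lvl_spectator demote_lvl_spectator[OF _ _ j] by simp
  qed
  show "(demote_lvl j \<circ> lvl) b \<le> (demote_lvl j \<circ> lvl) a + 2" if "0 < mult K a b" for a b
    using demote_lvl_le lvl_edge[OF that] by simp
  show "mult K (del_index q j a) (del_index q j b) \<le> 1" if "a < p - 1" "b < p - 1" for a b
    using that path_simple by (simp add: del_index_def)
qed

lemma layout_subgraph:
  assumes "graph K'" "verts K' \<subseteq> verts K" "\<And>a b. mult K' a b \<le> mult K a b"
    and "\<And>i. i < p \<Longrightarrow> q i \<in> verts K'"
  shows "parade_layout K' p q lvl"
proof
  show "0 < mult K' a b \<Longrightarrow> lvl b \<le> lvl a + 2" for a b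
    using lvl_edge assms(3)[of a b] by simp
  show "i < p \<Longrightarrow> j < p \<Longrightarrow> mult K' (q i) (q j) \<le> 1" for i j
    using path_simple assms(3) le_trans by blast
qed (use assms lvl_path lvl_spectator in auto)

context
  fixes x y
  assumes xy: "mult K x y = 1" and y: "y \<notin> q ` {..<p}"
    and near: "\<And>b. 0 < mult K y b \<Longrightarrow> b \<noteq> x \<Longrightarrow> lvl b \<le> lvl x + 2 \<and> lvl x \<le> lvl b + 2"
    and simple: "\<And>i. x \<in> q ` {..<p} \<Longrightarrow> i < p \<Longrightarrow> q i \<noteq> x \<Longrightarrow> mult K x (q i) + mult K y (q i) \<le> 1"
begin

lemma lvl_edge_contract:
  assumes pos: "0 < mult (contract K x y) a b"
  shows "lvl b \<le> lvl a + 2"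
proof -
  have "x \<noteq> y"
    using xy layout_graph by auto
  have "a \<noteq> y" "b \<noteq> y" "a \<noteq> b"
    using pos contract_mult_deleted[of a y b] by auto
  consider "a = x" | "b = x" | "a \<noteq> x" "b \<noteq> x"
    by blast
  then show ?thesis
  proof cases
    case 1
    then have "0 < mult K x b \<or> 0 < mult K y b"
      using pos contract_mult_left[OF \<open>x \<noteq> y\<close>] \<open>a \<noteq> b\<close> \<open>b \<noteq> y\<close> by simp
    then show ?thesis
      using lvl_edge near 1 \<open>a \<noteq> b\<close> by blast
  next
    case 2
    then have "0 < mult K a x \<or> 0 < mult K y a"
      using pos contract_mult_right[OF \<open>x \<noteq> y\<close>] \<open>a \<noteq> b\<close> \<open>a \<noteq> y\<close>
        graph_mult_sym[OF layout_graph, of a y] by simp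
    then show ?thesis
      using lvl_edge near 2 \<open>a \<noteq> b\<close> by blast
  next
    case 3
    then show ?thesis
      using pos lvl_edge contract_mult_other[OF layout_graph] \<open>a \<noteq> y\<close> \<open>b \<noteq> y\<close> by simp
  qed
qed

lemma path_simple_contract:
  assumes ij: "i < p" "j < p"
  shows "mult (contract K x y) (q i) (q j) \<le> 1"
proof -
  have "x \<noteq> y"
    using xy layout_graph by auto
  have qy: "q i \<noteq> y" "q j \<noteq> y"
    using y ij by auto
  consider "q i = q j" | "q i = x" "q j \<noteq> x" | "q j = x" "q i \<noteq> x" | "q i \<noteq> x" "q j \<noteq> x"
    by blast
  then show ?thesis
  proof cases
    case 2
    then show ?thesis
      using simple[of j] contract_mult_left[OF \<open>x \<noteq> y\<close>] qy ij by force
  next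
    case 3
    then show ?thesis
      using simple[of i] contract_mult_right[OF \<open>x \<noteq> y\<close>] qy ij
        graph_mult_sym[OF layout_graph, of x "q i"] graph_mult_sym[OF layout_graph, of y "q i"]
      by force
  next
    case 4
    then show ?thesis
      using path_simple[OF ij] contract_mult_other[OF layout_graph] qy by simp
  qed (simp add: contract_mult_deleted)
qed

lemma layout_contract: "parade_layout (contract K x y) p q lvl"
proof
  show "graph (contract K x y)"
    by (rule graph_contract[OF layout_graph xy])
  show "i < p \<Longrightarrow> q i \<in> verts (contract K x y)" for i
    using path_in_verts y by auto
qed (use lvl_path lvl_spectator lvl_edge_contract path_simple_contract in auto)

end

lemma layout_contract_same_lvl:
  assumes "mult K x y = 1" "x \<notin> q ` {..<p}" "y \<notin> q ` {..<p}" "lvl x = lvl y"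
  shows "parade_layout (contract K x y) p q lvl"
  using assms lvl_edge lvl_edge' by (intro layout_contract) auto

lemma layout_contract_demoted:
  assumes "mult K x y = 1" "j < p"
    and "x \<in> insert (q j) (verts K - q ` {..<p})" "y \<in> insert (q j) (verts K - q ` {..<p})"
    and "demote_lvl j (lvl x) = demote_lvl j (lvl y)"
  shows "parade_layout (contract K x y) (p - 1) (del_index q j) (demote_lvl j \<circ> lvl)"
proof -
  interpret demoted: parade_layout K "p - 1" "del_index q j" "demote_lvl j \<circ> lvl"
    by (rule layout_demote[OF assms(2)])
  show ?thesis
    using assms spectators_del_index[OF assms(2)] by (intro demoted.layout_contract_same_lvl) auto
qed

text \<open>Demoting q j squeezes all neighbours of q j between the levels of its two path
  neighbours, one of which is q i.\<close>
lemma layout_contract_path_edge: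
  assumes ij: "i < p" "j < p" and xy: "mult K (q i) (q j) = 1"
  shows "parade_layout (contract K (q i) (q j)) (p - 1) (del_index q j) (demote_lvl j \<circ> lvl)"
proof -
  interpret demoted: parade_layout K "p - 1" "del_index q j" "demote_lvl j \<circ> lvl"
    by (rule layout_demote[OF ij(2)])
  have adj: "i = Suc j \<or> j = Suc i"
    using path_adj[OF ij] xy by simp
  show ?thesis
  proof (rule demoted.layout_contract[OF xy])
    show "q j \<notin> del_index q j ` {..<p - 1}"
      using spectators_del_index[OF ij(2)] path_in_verts[OF ij(2)] by blast
    show "(demote_lvl j \<circ> lvl) b \<le> (demote_lvl j \<circ> lvl) (q i) + 2
        \<and> (demote_lvl j \<circ> lvl) (q i) \<le> (demote_lvl j \<circ> lvl) b + 2" if "0 < mult K (q j) b" for b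
      using lvl_edge[OF that] lvl_edge'[OF that] lvl_path ij adj
      by (auto simp: demote_lvl_def)
    show "mult K (q i) (del_index q j t) + mult K (q j) (del_index q j t) \<le> 1"
      if "t < p - 1" "del_index q j t \<noteq> q i" for t
    proof -
      define s where "s = (if t < j then t else Suc t)"
      have s: "s < p" "s \<noteq> i" "s \<noteq> j" "del_index q j t = q s"
        using that unfolding s_def del_index_def by auto
      have "\<not> (0 < mult K (q i) (q s) \<and> 0 < mult K (q j) (q s))"
        using path_adj[OF ij(1) s(1)] path_adj[OF ij(2) s(1)] adj s(2,3) by (auto; metis neq0_conv)
      then show ?thesis
        using path_simple[OF ij(1) s(1)] path_simple[OF ij(2) s(1)] s(4) by auto
    qed
  qed
qed

lemma demote_to_common_lvl:
  assumes xy: "0 < mult K x y" and not_path: "\<not> (x \<in> q ` {..<p} \<and> y \<in> q ` {..<p})"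
    and ne: "lvl x \<noteq> lvl y"
  obtains j where "j < p" "x \<in> insert (q j) (verts K - q ` {..<p})"
    "y \<in> insert (q j) (verts K - q ` {..<p})" "demote_lvl j (lvl x) = demote_lvl j (lvl y)"
proof -
  have yx: "0 < mult K y x"
    using xy graph_mult_sym[OF layout_graph] by metis
  have V: "x \<in> verts K" "y \<in> verts K"
    using graph_mult_pos_verts[OF layout_graph xy] by auto
  consider "x \<notin> q ` {..<p}" "y \<notin> q ` {..<p}" | i where "i < p" "x = q i" "y \<notin> q ` {..<p}"
    | j where "j < p" "y = q j" "x \<notin> q ` {..<p}"
    using not_path by blast
  then show ?thesis
  proof cases
    case 1
    then have "even (lvl x)" "even (lvl y)" "lvl x \<le> 2 * p" "lvl y \<le> 2 * p"
      using lvl_spectator V by auto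
    then obtain a b where ab: "lvl x = 2 * a" "lvl y = 2 * b" "a \<le> p" "b \<le> p"
      by (auto elim!: evenE)
    then have "a = Suc b \<or> b = Suc a"
      using lvl_edge[OF xy] lvl_edge[OF yx] ne by auto
    then show ?thesis
      using that[of "min a b"] 1 V ab by (auto simp: demote_lvl_def)
  next
    case (2 i)
    then show ?thesis
      using that[of i] lvl_spectator_path[of y i] yx lvl_path V by (auto simp: demote_lvl_def)
  next
    case (3 j)
    then show ?thesis
      using that[of j] lvl_spectator_path[of x j] xy lvl_path V by (auto simp: demote_lvl_def)
  qed
qed

lemma layout_contract_edge:
  assumes xy: "mult K x y = 1"
  obtains p' q' lvl' where "parade_layout (contract K x y) p' q' lvl'" "p \<le> Suc p'"
proof (cases "x \<in> q ` {..<p} \<and> y \<in> q ` {..<p}")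
  case True
  then obtain i j where "i < p" "j < p" "x = q i" "y = q j"
    by blast
  then show ?thesis
    using that layout_contract_path_edge xy by fastforce
next
  case not_path: False
  show ?thesis
  proof (cases "lvl x = lvl y")
    case True
    have "x \<in> verts K" "y \<in> verts K"
      using graph_mult_pos_verts[OF layout_graph, of x y] xy by auto
    then have "x \<notin> q ` {..<p} \<and> y \<notin> q ` {..<p}"
      using not_path True lvl_odd_iff by metis
    then show ?thesis
      using that[of p q lvl] layout_contract_same_lvl[OF xy] True by simp
  next
    case False
    then obtain j where "j < p" "x \<in> insert (q j) (verts K - q ` {..<p})"
      "y \<in> insert (q j) (verts K - q ` {..<p})" "demote_lvl j (lvl x) = demote_lvl j (lvl y)"
      using demote_to_common_lvl[of x y] xy not_path by auto
    then show ?thesis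
      using that layout_contract_demoted xy by fastforce
  qed
qed

lemma layout_del_vertex:
  assumes v: "v \<in> verts K" "\<forall>b. mult K v b = 0" "2 \<le> card (verts K)"
  obtains p' q' lvl' where "parade_layout (del_vertex K v) p' q' lvl'"
    "card (verts (del_vertex K v)) + p \<le> card (verts K) + p'"
proof -
  let ?K' = "del_vertex K v"
  have "minor_step K ?K'"
    unfolding minor_step_def using v by blast
  then have g': "graph ?K'"
    by (rule minor_step_graph[OF layout_graph])
  have card: "card (verts ?K') = card (verts K) - 1"
    using v(1) graph_finite[OF layout_graph] by (simp add: del_vertex_def)
  show ?thesis
  proof (cases "v \<in> q ` {..<p}")
    case True
    then obtain j where j: "j < p" "v = q j"
      by auto
    interpret demoted: parade_layout K "p - 1" "del_index q j" "demote_lvl j \<circ> lvl"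
      by (rule layout_demote[OF j(1)])
    have "parade_layout ?K' (p - 1) (del_index q j) (demote_lvl j \<circ> lvl)"
      using g' j spectators_del_index[OF j(1)] demoted.path_in_verts
      by (intro demoted.layout_subgraph) (auto simp: del_vertex_def)
    moreover have "card (verts ?K') + p \<le> card (verts K) + (p - 1)"
      using card j(1) v(3) by linarith
    ultimately show ?thesis
      by (rule that)
  next
    case False
    then have "parade_layout ?K' p q lvl"
      using g' path_in_verts by (intro layout_subgraph) (auto simp: del_vertex_def)
    moreover have "card (verts ?K') + p \<le> card (verts K) + p"
      using card by linarith
    ultimately show ?thesis
      by (rule that)
  qed
qed

lemma layout_minor_step:
  assumes st: "minor_step K K'"
  obtains p' q' lvl' where "parade_layout K' p' q' lvl'" "card (verts K') + p \<le> card (verts K) + p'"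
  using st unfolding minor_step_def
proof (elim disjE exE conjE bexE)
  fix v assume "v \<in> verts K" "\<forall>b. mult K v b = 0" "2 \<le> card (verts K)" "K' = del_vertex K v"
  then show ?thesis
    using layout_del_vertex that by blast
next
  fix x y assume "0 < mult K x y" "K' = del_edge K x y"
  then have "parade_layout K' p q lvl"
    using minor_step_graph[OF layout_graph st] path_in_verts by (intro layout_subgraph) (auto simp: del_edge_def)
  moreover have "card (verts K') + p \<le> card (verts K) + p"
    using \<open>K' = del_edge K x y\<close> by (simp add: del_edge_def)
  ultimately show ?thesis
    by (rule that)
next
  fix x y assume xy: "mult K x y = 1" "K' = contract K x y"
  then have "y \<in> verts K"
    using graph_mult_pos_verts[OF layout_graph, of x y] by simp
  then have "card (verts K') = card (verts K) - 1" "0 < card (verts K)"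
    using xy(2) graph_finite[OF layout_graph] by (auto simp: card_gt_0_iff)
  moreover obtain p' q' lvl' where "parade_layout K' p' q' lvl'" "p \<le> Suc p'"
    using layout_contract_edge[OF xy(1)] xy(2) by blast
  ultimately show ?thesis
    using that[of p' q' lvl'] by linarith
qed

end

lemma parade_layout_minor_steps:
  assumes "minor_step\<^sup>*\<^sup>* H K" "parade_layout H p q lvl"
  shows "\<exists>p' q' lvl'. parade_layout K p' q' lvl' \<and> card (verts K) + p \<le> card (verts H) + p'"
  using assms
proof (induction rule: rtranclp_induct)
  case (step K K')
  then obtain p' q' lvl' where L: "parade_layout K p' q' lvl'"
    and c: "card (verts K) + p \<le> card (verts H) + p'"
    by blast
  obtain p'' q'' lvl'' where "parade_layout K' p'' q'' lvl''"
    and "card (verts K') + p' \<le> card (verts K) + p''"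
    using parade_layout.layout_minor_step[OF L step(2)] by blast
  then show ?case
    using c by (intro exI[of _ p''] exI[of _ q''] exI[of _ lvl'']) simp
qed blast

lemma (in parade_layout) layout_iso:
  assumes "iso K K'" "graph K'"
  obtains q' lvl' where "parade_layout K' p q' lvl'"
proof -
  obtain f where f: "bij_betw f (verts K) (verts K')"
    and m: "\<And>a b. a \<in> verts K \<Longrightarrow> b \<in> verts K \<Longrightarrow> mult K' (f a) (f b) = mult K a b"
    using assms(1) unfolding iso_def by blast
  let ?g = "inv_into (verts K) f"
  have g: "?g w \<in> verts K" "f (?g w) = w" if "w \<in> verts K'" for w
    using that f by (auto simp: bij_betw_def inv_into_into f_inv_into_f)
  have gf: "?g (f a) = a" if "a \<in> verts K" for a
    using f that by (simp add: bij_betw_def)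
  have fq: "f (q i) \<in> verts K'" if "i < p" for i
    using f path_in_verts[OF that] by (auto simp: bij_betw_def)
  have "parade_layout K' p (f \<circ> q) (lvl \<circ> ?g)"
  proof
    show "graph K'"
      by (rule assms(2))
    show "i < p \<Longrightarrow> (f \<circ> q) i \<in> verts K'" for i
      using fq by simp
    show "i < p \<Longrightarrow> (lvl \<circ> ?g) ((f \<circ> q) i) = 2 * i + 1" for i
      using gf path_in_verts lvl_path by simp
    show "even ((lvl \<circ> ?g) w) \<and> (lvl \<circ> ?g) w \<le> 2 * p" if w: "w \<in> verts K' - (f \<circ> q) ` {..<p}" for w
    proof -
      have "?g w \<notin> q ` {..<p}"
      proof
        assume "?g w \<in> q ` {..<p}"
        then obtain i where "i < p" "?g w = q i"
          by blast
        then show False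
          using w g[of w] by auto
      qed
      then show ?thesis
        using lvl_spectator g[of w] w by simp
    qed
    show "(lvl \<circ> ?g) b \<le> (lvl \<circ> ?g) a + 2" if pos: "0 < mult K' a b" for a b
    proof -
      have "a \<in> verts K'" "b \<in> verts K'"
        using graph_mult_pos_verts[OF assms(2) pos] by auto
      then have "mult K (?g a) (?g b) = mult K' a b"
        using m[of "?g a" "?g b"] g by simp
      then show ?thesis
        using lvl_edge pos by simp
    qed
    show "i < p \<Longrightarrow> j < p \<Longrightarrow> mult K' ((f \<circ> q) i) ((f \<circ> q) j) \<le> 1" for i j
      using m path_in_verts path_simple by simp
  qed
  then show ?thesis
    by (rule that)
qed

section \<open>The parade layout of a unique shortest path\<close>

definition reachable :: "mgraph \<Rightarrow> nat \<Rightarrow> nat \<Rightarrow> bool" where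
  "reachable K u w \<longleftrightarrow> (\<exists>vs es. is_path K u w vs es)"

text \<open>Meaningful only if w is reachable from u; otherwise it is LEAST over the empty set.\<close>
definition path_dist :: "mgraph \<Rightarrow> nat \<Rightarrow> nat \<Rightarrow> nat" where
  "path_dist K u w = (LEAST l. \<exists>vs es. is_path K u w vs es \<and> length vs = Suc l)"

lemma path_dist_le:
  assumes "is_path K u w vs es"
  shows "reachable K u w \<and> Suc (path_dist K u w) \<le> length vs"
proof -
  have "vs \<noteq> []"
    using assms unfolding is_path_def by simp
  then have "\<exists>vs' es'. is_path K u w vs' es' \<and> length vs' = Suc (length vs - 1)"
    using assms by auto
  then have "path_dist K u w \<le> length vs - 1"
    unfolding path_dist_def by (rule Least_le)
  then show ?thesis
    using assms \<open>vs \<noteq> []\<close> unfolding reachable_def by (cases vs) auto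
qed

lemma path_dist_attained:
  assumes "reachable K u w"
  obtains vs es where "is_path K u w vs es" "length vs = Suc (path_dist K u w)"
proof -
  obtain vs es where P: "is_path K u w vs es"
    using assms unfolding reachable_def by blast
  then have "vs \<noteq> []"
    unfolding is_path_def by simp
  then have "\<exists>l vs es. is_path K u w vs es \<and> length vs = Suc l"
    using P by (intro exI[of _ "length vs - 1"] exI[of _ vs] exI[of _ es]) simp
  from LeastI_ex[OF this] show ?thesis
    using that unfolding path_dist_def by blast
qed

lemma path_dist_nth_le:
  assumes "is_path K u w vs es" "t < length vs"
  shows "reachable K u (vs ! t) \<and> path_dist K u (vs ! t) \<le> t"
  using path_dist_le[OF is_path_take[OF assms]] assms(2) by simp

lemma path_dist_edge:
  assumes g: "graph K" and r: "reachable K u w" and e: "0 < mult K w w'"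
  shows "reachable K u w' \<and> path_dist K u w' \<le> Suc (path_dist K u w)"
proof -
  obtain vs es where P: "is_path K u w vs es" and len: "length vs = Suc (path_dist K u w)"
    using path_dist_attained[OF r] by blast
  show ?thesis
  proof (cases "w' \<in> set vs")
    case True
    then obtain t where "t < length vs" "w' = vs ! t"
      by (auto simp: in_set_conv_nth)
    then have "reachable K u w' \<and> path_dist K u w' \<le> t"
      using path_dist_nth_le[OF P] by blast
    then show ?thesis
      using \<open>t < length vs\<close> len by simp
  next
    case False
    have "w \<noteq> w'" "w \<in> verts K" "w' \<in> verts K"
      using e g graph_mult_pos_verts[OF g e] by auto
    then have E: "is_path K w w' [w, w'] [0]"
      using is_path_edge e by blast
    have "w \<in> set vs"
      using P unfolding is_path_def by (metis last_in_set)
    then have "set vs \<inter> set [w, w'] = {w}"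
      using False by auto
    from path_dist_le[OF is_path_append[OF P E this]] show ?thesis
      using len by simp
  qed
qed

locale unique_shortest_path_graph =
  fixes H :: mgraph and vs es :: "nat list"
  assumes graph_H: "graph H" and usp: "unique_shortest_path H vs es"
begin

abbreviation "reach w \<equiv> reachable H (hd vs) w"
abbreviation "dist w \<equiv> path_dist H (hd vs) w"

lemma path: "is_path H (hd vs) (last vs) vs es"
  using usp unfolding unique_shortest_path_def shortest_path_def by blast

lemma shortest: "is_path H (hd vs) (last vs) a b \<Longrightarrow> length vs \<le> length a"
  using usp unfolding unique_shortest_path_def shortest_path_def by blast

lemma unique: "is_path H (hd vs) (last vs) a b \<Longrightarrow> length a = length vs \<Longrightarrow> a = vs \<and> b = es"
  using usp unfolding unique_shortest_path_def by blast

lemma dist_path_vertex: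
  assumes j: "j < length vs"
  shows "reach (vs ! j) \<and> dist (vs ! j) = j"
proof -
  have r: "reach (vs ! j)" "dist (vs ! j) \<le> j"
    using path_dist_nth_le[OF path j] by auto
  have "\<not> dist (vs ! j) < j"
  proof
    assume lt: "dist (vs ! j) < j"
    obtain a b where "is_path H (hd vs) (vs ! j) a b" "length a = Suc (dist (vs ! j))"
      using path_dist_attained[OF r(1)] by blast
    with is_path_concat[OF this(1) is_path_drop[OF path j]] obtain a' b'
      where "is_path H (hd vs) (last vs) a' b'" "length a' < Suc (dist (vs ! j)) + (length vs - j)"
      by auto
    then show False
      using shortest[of a' b'] lt j by linarith
  qed
  then show ?thesis
    using r by simp
qed

text \<open>Otherwise the parade could be rerouted through w.\<close>
lemma dist_neighbour_not_before:
  assumes w: "w \<in> verts H - set vs" and j: "j < length vs" and e: "0 < mult H w (vs ! j)"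
    and rw: "reach w"
  shows "Suc (dist w) \<noteq> j"
proof
  assume dj: "Suc (dist w) = j"
  obtain a b where A: "is_path H (hd vs) w a b" and la: "length a = j"
    using path_dist_attained[OF rw] dj by metis
  have in_a: "dist x < j" if x: "x \<in> set a" for x
  proof -
    obtain t where "t < length a" "x = a ! t"
      using x by (auto simp: in_set_conv_nth)
    then show ?thesis
      using path_dist_nth_le[OF A, of t] la by simp
  qed
  have in_drop: "j \<le> dist x" if "x \<in> set (drop j vs)" for x
    using that dist_path_vertex by (auto simp: in_set_conv_nth)
  have "w \<noteq> vs ! j" "vs ! j \<in> verts H"
    using w j nth_mem[OF j] path unfolding is_path_def by auto
  then have E: "is_path H w (vs ! j) [w, vs ! j] [0]"
    using is_path_edge w e by blast
  have "w \<in> set a"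
    using A unfolding is_path_def by (auto simp: last_in_set)
  moreover have "vs ! j \<notin> set a"
    using in_a[of "vs ! j"] dist_path_vertex[OF j] by auto
  ultimately have "is_path H (hd vs) (vs ! j) (a @ [vs ! j]) (b @ [0])"
    using is_path_append[OF A E] by auto
  moreover have "set (a @ [vs ! j]) \<inter> set (drop j vs) = {vs ! j}"
  proof
    have "x \<notin> set (drop j vs)" if "x \<in> set a" for x
      using in_a[OF that] in_drop[of x] by (meson leD)
    then show "set (a @ [vs ! j]) \<inter> set (drop j vs) \<subseteq> {vs ! j}"
      by auto
    show "{vs ! j} \<subseteq> set (a @ [vs ! j]) \<inter> set (drop j vs)"
      using nth_mem[of 0 "drop j vs"] j by simp
  qed
  ultimately have "is_path H (hd vs) (last vs) (a @ [vs ! j] @ tl (drop j vs)) (b @ [0] @ drop j es)"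
    using is_path_append is_path_drop[OF path j] by fastforce
  then have "a @ [vs ! j] @ tl (drop j vs) = vs"
    using unique la j by fastforce
  then show False
    using w \<open>w \<in> set a\<close> by (metis DiffD2 Un_iff set_append)
qed

lemma dist_neighbour:
  assumes w: "w \<in> verts H - set vs" and j: "j < length vs" and e: "0 < mult H w (vs ! j)"
  shows "reach w \<and> (dist w = j \<or> dist w = Suc j)"
proof -
  have e': "0 < mult H (vs ! j) w"
    using e graph_mult_sym[OF graph_H] by metis
  have "reach w \<and> dist w \<le> Suc (dist (vs ! j))"
    using path_dist_edge[OF graph_H _ e'] dist_path_vertex[OF j] by blast
  then have rw: "reach w" "dist w \<le> Suc j"
    using dist_path_vertex[OF j] by auto
  have "j \<le> Suc (dist w)"
    using path_dist_edge[OF graph_H rw(1) e] dist_path_vertex[OF j] by auto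
  then show ?thesis
    using rw dist_neighbour_not_before[OF w j e rw(1)] by auto
qed

lemma mult_path_step_le_1:
  assumes i: "Suc i < length vs"
  shows "mult H (vs ! i) (vs ! Suc i) \<le> 1"
proof (rule ccontr)
  assume gt: "\<not> ?thesis"
  define es' where "es' = es[i := (if es ! i = 0 then 1 else 0)]"
  have len: "length es' = length es" "i < length es"
    using path i unfolding is_path_def es'_def by simp_all
  have "es' ! t < mult H (vs ! t) (vs ! Suc t)" if "t < length es" for t
  proof (cases "t = i")
    case True
    then show ?thesis
      using gt len unfolding es'_def by simp
  next
    case False
    then show ?thesis
      using is_path_mult_pos[OF path, of t] that path unfolding es'_def is_path_def by simp
  qed
  then have "is_path H (hd vs) (last vs) vs es'"
    using path len unfolding is_path_def by simp
  then have "es' = es"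
    using unique by blast
  then have "es ! i = (if es ! i = 0 then 1 else 0)"
    using nth_list_update_eq[OF len(2)] unfolding es'_def by metis
  then show False
    by (simp split: if_splits)
qed

lemma path_adj:
  assumes "i < length vs" "j < length vs" "0 < mult H (vs ! i) (vs ! j)"
  shows "i = Suc j \<or> j = Suc i"
proof -
  have e: "0 < mult H (vs ! j) (vs ! i)"
    using assms(3) graph_mult_sym[OF graph_H] by metis
  have di: "reach (vs ! i)" "dist (vs ! i) = i" and dj: "reach (vs ! j)" "dist (vs ! j) = j"
    using dist_path_vertex assms(1,2) by auto
  have "j \<le> Suc i" "i \<le> Suc j"
    using path_dist_edge[OF graph_H di(1) assms(3)] path_dist_edge[OF graph_H dj(1) e] di dj by auto
  moreover have "i \<noteq> j"
    using assms(3) graph_H by auto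
  ultimately show ?thesis
    by linarith
qed

lemma mult_path_le_1:
  assumes ij: "i < length vs" "j < length vs"
  shows "mult H (vs ! i) (vs ! j) \<le> 1"
proof (cases "mult H (vs ! i) (vs ! j) = 0")
  case False
  then have "i = Suc j \<or> j = Suc i"
    using path_adj[OF ij] by simp
  then show ?thesis
  proof
    assume "i = Suc j"
    then show ?thesis
      using mult_path_step_le_1[of j] graph_mult_sym[OF graph_H, of "vs ! i" "vs ! j"] ij by simp
  next
    assume "j = Suc i"
    then show ?thesis
      using mult_path_step_le_1[of i] ij by simp
  qed
qed simp

definition dist_lvl :: "nat \<Rightarrow> nat" where
  "dist_lvl w = (if reach w then if w \<in> set vs then 2 * dist w + 1
    else min (2 * dist w) (2 * length vs) else 0)"

lemma dist_lvl_path: "j < length vs \<Longrightarrow> dist_lvl (vs ! j) = 2 * j + 1"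
  using dist_path_vertex unfolding dist_lvl_def by simp

lemma dist_lvl_edge:
  assumes e: "0 < mult H a b"
  shows "dist_lvl b \<le> dist_lvl a + 2"
proof (cases "reach a")
  case False
  have "0 < mult H b a"
    using e graph_mult_sym[OF graph_H] by metis
  then have "\<not> reach b"
    using False path_dist_edge[OF graph_H] by blast
  then show ?thesis
    by (simp add: dist_lvl_def)
next
  case True
  then have rb: "reach b" "dist b \<le> Suc (dist a)"
    using path_dist_edge[OF graph_H True e] by auto
  have off_path: "dist_lvl w = min (2 * dist w) (2 * length vs)" if "reach w" "w \<notin> set vs" for w
    using that unfolding dist_lvl_def by simp
  have on_path: "dist_lvl w = 2 * dist w + 1" if "reach w" "w \<in> set vs" for w
    using that unfolding dist_lvl_def by simp
  consider "b \<in> set vs" "a \<notin> set vs" | "b \<in> set vs" "a \<in> set vs" | "b \<notin> set vs"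
    by blast
  then show ?thesis
  proof cases
    case 1
    then obtain j where j: "j < length vs" "b = vs ! j"
      by (auto simp: in_set_conv_nth)
    moreover have "a \<in> verts H"
      using graph_mult_pos_verts[OF graph_H e] by simp
    ultimately have "dist a = j \<or> dist a = Suc j"
      using dist_neighbour[of a j] e 1 by blast
    then have "dist_lvl a = 2 * dist a"
      using off_path[OF True 1(2)] j(1) by auto
    then show ?thesis
      using dist_lvl_path[OF j(1)] j(2) \<open>dist a = j \<or> dist a = Suc j\<close> by auto
  next
    case 2
    then show ?thesis
      using on_path[OF True 2(2)] on_path[OF rb(1) 2(1)] rb(2) by linarith
  next
    case 3
    have "dist_lvl a \<ge> min (2 * dist a) (2 * length vs)"
      using on_path[OF True] off_path[OF True] by (cases "a \<in> set vs") auto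
    then show ?thesis
      using off_path[OF rb(1) 3] rb(2) by linarith
  qed
qed

lemma parade_layout_dist_lvl: "parade_layout H (length vs) (nth vs) dist_lvl"
proof
  have "nth vs ` {..<length vs} = set vs"
    by (auto simp: in_set_conv_nth)
  then show "even (dist_lvl w) \<and> dist_lvl w \<le> 2 * length vs"
    if "w \<in> verts H - nth vs ` {..<length vs}" for w
    using that unfolding dist_lvl_def by (auto simp: min_def)
  show "i < length vs \<Longrightarrow> vs ! i \<in> verts H" for i
    using path nth_mem unfolding is_path_def by blast
  show "graph H"
    by (rule graph_H)
  show "i < length vs \<Longrightarrow> dist_lvl (vs ! i) = 2 * i + 1" for i
    by (rule dist_lvl_path)
  show "0 < mult H a b \<Longrightarrow> dist_lvl b \<le> dist_lvl a + 2" for a b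
    by (rule dist_lvl_edge)
  show "i < length vs \<Longrightarrow> j < length vs \<Longrightarrow> mult H (vs ! i) (vs ! j) \<le> 1" for i j
    by (rule mult_path_le_1)
qed

end

lemma sp_floor_parade_layout:
  assumes g: "graph G"
  obtains p q lvl where "parade_layout G p q lvl" "card (verts G) \<le> p + sp_floor G"
proof -
  obtain H where H: "graph H" "is_minor G H" "sp H = sp_floor G"
    using sp_floor_attained[OF g] by blast
  obtain vs es where U: "unique_shortest_path H vs es" "length vs = usp H"
    using usp_attained[OF H(1)] by blast
  have L: "parade_layout H (length vs) (nth vs) (unique_shortest_path_graph.dist_lvl H vs)"
    by (rule unique_shortest_path_graph.parade_layout_dist_lvl[OF unique_shortest_path_graph.intro[OF H(1) U(1)]])
  obtain K where s: "minor_step\<^sup>*\<^sup>* H K" and i: "iso K G"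
    using H(2) unfolding is_minor_def by blast
  then obtain p q lvl' where LK: "parade_layout K p q lvl'"
    and c: "card (verts K) + length vs \<le> card (verts H) + p"
    using parade_layout_minor_steps[OF s L] by blast
  obtain q' lvl'' where "parade_layout G p q' lvl''"
    using parade_layout.layout_iso[OF LK i g] by blast
  moreover have "card (verts G) = card (verts K)"
    using i unfolding iso_def by (metis bij_betw_same_card)
  moreover have "card (verts H) \<le> length vs + sp_floor G"
    using H(3) U(2) usp_le_card[OF H(1)] unfolding sp_def by simp
  ultimately show ?thesis
    using that c by simp
qed

section \<open>Crowds\<close>

text \<open>Spectators at level 0 or 2 p see a single path vertex; moving them to level 2 or
  2 p - 2 keeps the layout, and afterwards every spectator of the crowd sees exactly two.\<close>
lemma (in parade_layout) clamp_spectators: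
  assumes p: "2 \<le> p"
  obtains lvl' where "parade_layout K p q lvl'"
    "\<And>w. w \<in> verts K - q ` {..<p} \<Longrightarrow> 2 \<le> lvl' w \<and> lvl' w \<le> 2 * p - 2"
proof -
  define lvl' where "lvl' w = (if w \<in> q ` {..<p} then lvl w else min (max (lvl w) 2) (2 * p - 2))" for w
  have edge: "lvl' b \<le> lvl' a + 2" if e: "0 < mult K a b" for a b
  proof -
    have ab: "a \<in> verts K" "b \<in> verts K"
      using graph_mult_pos_verts[OF layout_graph e] by auto
    have e': "0 < mult K b a"
      using e graph_mult_sym[OF layout_graph] by metis
    consider "a \<in> q ` {..<p}" "b \<in> q ` {..<p}" | i where "i < p" "a = q i" "b \<notin> q ` {..<p}"
      | i where "i < p" "b = q i" "a \<notin> q ` {..<p}" | "a \<notin> q ` {..<p}" "b \<notin> q ` {..<p}"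
      by blast
    then show ?thesis
    proof cases
      case 1
      then show ?thesis
        using lvl_edge[OF e] unfolding lvl'_def by simp
    next
      case (2 i)
      then show ?thesis
        using lvl_spectator_path[of b i] e' ab lvl_path unfolding lvl'_def by auto
    next
      case (3 i)
      then show ?thesis
        using lvl_spectator_path[of a i] e ab lvl_path unfolding lvl'_def by auto
    next
      case 4
      then show ?thesis
        using lvl_edge[OF e] unfolding lvl'_def by auto
    qed
  qed
  have "parade_layout K p q lvl'"
  proof
    show "even (lvl' w) \<and> lvl' w \<le> 2 * p" if "w \<in> verts K - q ` {..<p}" for w
      using that lvl_spectator[OF that] unfolding lvl'_def by (auto simp: min_def max_def)
  qed (use layout_graph path_in_verts lvl_path edge path_simple lvl'_def in auto)
  moreover have "2 \<le> lvl' w \<and> lvl' w \<le> 2 * p - 2" if "w \<in> verts K - q ` {..<p}" for w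
    using that p unfolding lvl'_def by auto
  ultimately show ?thesis
    using that by blast
qed

definition crowd :: "nat set \<Rightarrow> nat \<Rightarrow> (nat \<Rightarrow> nat) \<Rightarrow> (nat \<Rightarrow> nat) \<Rightarrow> nat \<Rightarrow> mgraph" where
  "crowd V p q lvl m = \<lparr>verts = V, mult = (\<lambda>a b.
     if a \<in> V \<and> b \<in> V \<and> a \<noteq> b \<and> lvl a \<le> lvl b + 2 \<and> lvl b \<le> lvl a + 2
     then if a \<in> q ` {..<p} \<and> b \<in> q ` {..<p} then 1 else m
     else 0)\<rparr>"

locale tight_parade_layout = parade_layout +
  assumes two_le_p: "2 \<le> p"
    and lvl_tight: "w \<in> verts K - q ` {..<p} \<Longrightarrow> 2 \<le> lvl w \<and> lvl w \<le> 2 * p - 2"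
begin

abbreviation "crowd_graph m \<equiv> crowd (verts K) p q lvl m"

lemma verts_crowd [simp]: "verts (crowd_graph m) = verts K"
  by (simp add: crowd_def)

lemma adj_crowd:
  "1 \<le> m \<Longrightarrow> adj (crowd_graph m) a b \<longleftrightarrow>
    a \<in> verts K \<and> b \<in> verts K \<and> a \<noteq> b \<and> lvl a \<le> lvl b + 2 \<and> lvl b \<le> lvl a + 2"
  by (auto simp: adj_def crowd_def)

lemma crowd_layout:
  assumes "1 \<le> m"
  shows "parade_layout (crowd_graph m) p q lvl"
proof
  show "graph (crowd_graph m)"
    using graph_finite[OF layout_graph] path_in_verts[of 0] two_le_p
    unfolding graph_def crowd_def by auto
  show "0 < mult (crowd_graph m) a b \<Longrightarrow> lvl b \<le> lvl a + 2" for a b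
    by (simp add: crowd_def split: if_splits)
  show "i < p \<Longrightarrow> j < p \<Longrightarrow> mult (crowd_graph m) (q i) (q j) \<le> 1" for i j
    by (simp add: crowd_def)
qed (use path_in_verts lvl_path lvl_spectator in auto)

lemma spanning_subgraph_crowd:
  assumes m: "\<And>a b. mult K a b \<le> m"
  shows "spanning_subgraph K (crowd_graph m)"
  unfolding spanning_subgraph_def
proof (intro conjI allI)
  fix a b
  show "mult K a b \<le> mult (crowd_graph m) a b"
  proof (cases "mult K a b = 0")
    case False
    then have e: "0 < mult K a b"
      by simp
    then have "a \<in> verts K" "b \<in> verts K" "a \<noteq> b"
      using graph_mult_pos_verts[OF layout_graph e] layout_graph by auto
    moreover have "mult K a b \<le> 1" if "a \<in> q ` {..<p}" "b \<in> q ` {..<p}"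
      using that path_simple by auto
    ultimately show ?thesis
      using lvl_edge[OF e] lvl_edge'[OF e] m[of a b] unfolding crowd_def by auto
  qed simp
qed simp

lemma mult_crowd_le: "1 \<le> m \<Longrightarrow> mult (crowd_graph m) a b \<le> m"
  by (simp add: crowd_def)

lemma unique_shortest_path_crowd:
  assumes "1 \<le> m"
  shows "unique_shortest_path (crowd_graph m) (map q [0..<p]) (replicate (p - 1) 0)"
proof -
  interpret crowd: parade_layout "crowd_graph m" p q lvl
    by (rule crowd_layout[OF assms])
  show ?thesis
  proof (rule crowd.unique_shortest_path_layout)
    show "0 < p"
      using two_le_p by simp
    show "0 < mult (crowd_graph m) (q i) (q (Suc i))" if "Suc i < p" for i
      using that path_in_verts lvl_path path_eq_iff[of i "Suc i"] unfolding crowd_def by auto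
  qed
qed

lemma lvl_spectator_slot:
  assumes "w \<in> verts K - q ` {..<p}"
  obtains s where "lvl w = 2 * s + 2" "Suc s < p"
proof -
  obtain k where "lvl w = 2 * k"
    using lvl_spectator[OF assms] by (auto elim: evenE)
  then show ?thesis
    using that[of "k - 1"] lvl_tight[OF assms] by auto
qed

context
  fixes m :: nat
  assumes m: "1 \<le> m"
begin

lemma crowd_spectator_neighbours:
  assumes w: "w \<in> verts K - q ` {..<p}"
  obtains s where "Suc s < p" "{x \<in> q ` {..<p}. adj (crowd_graph m) w x} = {q s, q (Suc s)}"
proof -
  obtain s where s: "lvl w = 2 * s + 2" "Suc s < p"
    using lvl_spectator_slot[OF w] by blast
  have "{x \<in> q ` {..<p}. adj (crowd_graph m) w x} = {q s, q (Suc s)}"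
  proof (intro equalityI subsetI)
    fix x assume "x \<in> {x \<in> q ` {..<p}. adj (crowd_graph m) w x}"
    then obtain i where i: "i < p" "x = q i" "adj (crowd_graph m) w (q i)"
      by blast
    then have "i = s \<or> i = Suc s"
      using s lvl_path[OF i(1)] unfolding adj_crowd[OF m] by auto
    then show "x \<in> {q s, q (Suc s)}"
      using i(2) by blast
  next
    fix x assume x: "x \<in> {q s, q (Suc s)}"
    moreover have "x \<noteq> w"
      using x w s(2) by auto
    ultimately show "x \<in> {x \<in> q ` {..<p}. adj (crowd_graph m) w x}"
      using s w path_in_verts lvl_path unfolding adj_crowd[OF m] by auto
  qed
  with s(2) show ?thesis
    by (rule that)
qed

lemma crowd_spectators_adj:
  assumes w: "w1 \<in> verts K - q ` {..<p}" "w2 \<in> verts K - q ` {..<p}" "w1 \<noteq> w2"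
    and i: "i < p" "adj (crowd_graph m) w1 (q i)" "adj (crowd_graph m) w2 (q i)"
  shows "adj (crowd_graph m) w1 w2"
proof -
  obtain s1 where s1: "lvl w1 = 2 * s1 + 2"
    using lvl_spectator_slot[OF w(1)] by blast
  obtain s2 where s2: "lvl w2 = 2 * s2 + 2"
    using lvl_spectator_slot[OF w(2)] by blast
  have "2 * s1 \<le> 2 * i + 1" "2 * i \<le> 2 * s1 + 3"
    using i(2) s1 lvl_path[OF i(1)] unfolding adj_crowd[OF m] by simp_all
  then have "s1 \<le> i" "i \<le> s1 + 1"
    by simp_all
  have "2 * s2 \<le> 2 * i + 1" "2 * i \<le> 2 * s2 + 3"
    using i(3) s2 lvl_path[OF i(1)] unfolding adj_crowd[OF m] by simp_all
  then have "s2 \<le> i" "i \<le> s2 + 1"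
    by simp_all
  with \<open>s1 \<le> i\<close> \<open>i \<le> s1 + 1\<close> have "lvl w1 \<le> lvl w2 + 2 \<and> lvl w2 \<le> lvl w1 + 2"
    unfolding s1 s2 by simp
  then show ?thesis
    using w unfolding adj_crowd[OF m] by simp
qed

lemma crowd_mult_eq_m:
  assumes i: "i < mult (crowd_graph m) a b"
    and ne: "\<not> parade_edge (map q [0..<p]) (replicate (p - 1) 0) a b i"
  shows "mult (crowd_graph m) a b = m"
proof (rule ccontr)
  interpret crowd: parade_layout "crowd_graph m" p q lvl
    by (rule crowd_layout[OF m])
  assume "mult (crowd_graph m) a b \<noteq> m"
  then have "a \<in> q ` {..<p} \<and> b \<in> q ` {..<p}" "mult (crowd_graph m) a b = 1"
    using i by (simp_all add: crowd_def split: if_splits)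
  then obtain s t where st: "s < p" "t < p" "a = q s" "b = q t" "mult (crowd_graph m) a b = 1"
    by blast
  then have "s = Suc t \<or> t = Suc s" "i = 0"
    using crowd.path_adj[of s t] i by auto
  then have "parade_edge (map q [0..<p]) (replicate (p - 1) 0) a b i"
    unfolding parade_edge_def using st by (intro exI[of _ "min s t"]) auto
  then show False
    using ne by blast
qed

lemma crowded_parade_crowd:
  assumes usp: "usp (crowd_graph m) = p"
  shows "crowded_parade (crowd_graph m) p (map q [0..<p]) (replicate (p - 1) 0)"
  unfolding crowded_parade_def parade_def
proof (intro conjI ballI impI)
  let ?vs = "map q [0..<p]"
  have set_vs: "set ?vs = q ` {..<p}"
    by auto
  show "2 \<le> p" "length ?vs = p"
    using two_le_p by simp_all
  show "unique_shortest_path (crowd_graph m) ?vs (replicate (p - 1) 0)" "length ?vs = usp (crowd_graph m)"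
    using unique_shortest_path_crowd[OF m] usp by simp_all
  show "\<exists>a b. a \<noteq> b \<and> {x \<in> set ?vs. adj (crowd_graph m) w x} = {a, b} \<and> adj (crowd_graph m) a b"
    if "w \<in> verts (crowd_graph m) - set ?vs" for w
  proof -
    have "w \<in> verts K - q ` {..<p}"
      using that unfolding set_vs by simp
    then obtain s where s: "Suc s < p" "{x \<in> q ` {..<p}. adj (crowd_graph m) w x} = {q s, q (Suc s)}"
      by (rule crowd_spectator_neighbours)
    moreover have "q s \<noteq> q (Suc s)" "adj (crowd_graph m) (q s) (q (Suc s))"
      using s(1) path_eq_iff path_in_verts lvl_path unfolding adj_crowd[OF m] by auto
    ultimately show ?thesis
      unfolding set_vs by blast
  qed
  show "adj (crowd_graph m) w1 w2"
    if w: "w1 \<in> verts (crowd_graph m) - set ?vs" "w2 \<in> verts (crowd_graph m) - set ?vs"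
      and h: "w1 \<noteq> w2 \<and> (\<exists>x \<in> set ?vs. adj (crowd_graph m) w1 x \<and> adj (crowd_graph m) w2 x)" for w1 w2
  proof -
    obtain i where "i < p" "adj (crowd_graph m) w1 (q i)" "adj (crowd_graph m) w2 (q i)"
      using h unfolding set_vs by blast
    moreover have "w1 \<in> verts K - q ` {..<p}" "w2 \<in> verts K - q ` {..<p}"
      using w unfolding set_vs by simp_all
    ultimately show ?thesis
      using crowd_spectators_adj h by blast
  qed
qed

lemma saturated_crowd:
  assumes "usp (crowd_graph m) = p"
  shows "saturated_crowded_parade m p (crowd_graph m)"
proof -
  have "p \<noteq> 1"
    using two_le_p by simp
  moreover have "\<forall>a b i. i < mult (crowd_graph m) a b
      \<and> \<not> parade_edge (map q [0..<p]) (replicate (p - 1) 0) a b i \<longrightarrow> mult (crowd_graph m) a b = m"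
    using crowd_mult_eq_m by blast
  ultimately show ?thesis
    unfolding saturated_crowded_parade_def using crowded_parade_crowd[OF assms] by auto
qed

end

end

section \<open>Minor-maximal graphs\<close>

lemma minor_maximal_spanning_subgraph_eq:
  assumes max: "minor_maximal (graph_class n m k) G" and g': "graph G'"
    and S: "spanning_subgraph G G'" and m': "\<And>a b. mult G' a b \<le> m" and sp': "sp G' \<le> k"
  shows "G' = G"
proof -
  have G: "graph_class n m k G" and max': "\<And>H. graph_class n m k H \<Longrightarrow> is_minor G H \<Longrightarrow> iso H G"
    using max unfolding minor_maximal_def by auto
  then have g: "graph G"
    unfolding graph_class_def by simp
  have "k \<le> sp_floor G'"
    using sp_floor_spanning_subgraph[OF g g' S] G unfolding graph_class_def by simp
  moreover have "sp_floor G' \<le> sp G'"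
    using sp_floor_le_sp[OF g' is_minor_refl] .
  ultimately have "graph_class n m k G'"
    using G g' S m' sp' unfolding graph_class_def spanning_subgraph_def by auto
  then have "iso G' G"
    using max' spanning_subgraph_is_minor[OF g g' S] by blast
  then show ?thesis
    using spanning_subgraph_iso_eq[OF g g' S] by blast
qed

definition complete_mgraph :: "nat set \<Rightarrow> nat \<Rightarrow> mgraph" where
  "complete_mgraph V m = \<lparr>verts = V, mult = (\<lambda>a b. if a \<in> V \<and> b \<in> V \<and> a \<noteq> b then m else 0)\<rparr>"

lemma minor_maximal_complete:
  assumes max: "minor_maximal (graph_class n m k) G" and k: "k + 1 = n"
  shows "saturated_crowded_parade m 1 G"
proof -
  have g: "graph G" and card: "card (verts G) = n" and m: "\<And>a b. mult G a b \<le> m"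
    using max unfolding minor_maximal_def graph_class_def by auto
  let ?G' = "complete_mgraph (verts G) m"
  have g': "graph ?G'"
    using g unfolding graph_def complete_mgraph_def by auto
  have "mult G a b \<le> mult ?G' a b" for a b
  proof (cases "a \<in> verts G \<and> b \<in> verts G \<and> a \<noteq> b")
    case False
    then have "mult G a b = 0"
      using graph_mult_outside[OF g] g by auto
    then show ?thesis
      by simp
  qed (simp add: m complete_mgraph_def)
  then have "spanning_subgraph G ?G'"
    unfolding spanning_subgraph_def complete_mgraph_def by simp
  moreover have "mult ?G' a b \<le> m" for a b
    by (simp add: complete_mgraph_def)
  moreover have "sp ?G' \<le> k"
    using usp_pos[OF g'] card k unfolding sp_def complete_mgraph_def by simp
  ultimately have "?G' = G"
    by (rule minor_maximal_spanning_subgraph_eq[OF max g'])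
  then have "mult G a b = mult ?G' a b" for a b
    by simp
  then have "mult G a b = m" if "a \<in> verts G" "b \<in> verts G" "a \<noteq> b" for a b
    using that unfolding complete_mgraph_def by simp
  then show ?thesis
    unfolding saturated_crowded_parade_def by simp
qed

lemma minor_maximal_crowd:
  assumes max: "minor_maximal (graph_class n m k) G" and k: "k + 2 \<le> n" and m: "1 \<le> m"
  shows "saturated_crowded_parade m (n - k) G"
proof -
  have g: "graph G" and card: "card (verts G) = n" and mG: "\<And>a b. mult G a b \<le> m"
    and spf: "sp_floor G = k"
    using max unfolding minor_maximal_def graph_class_def by auto
  obtain p q lvl where L: "parade_layout G p q lvl" and "card (verts G) \<le> p + sp_floor G"
    by (rule sp_floor_parade_layout[OF g])
  then have np: "n \<le> p + k"
    using card spf by simp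
  then have p: "2 \<le> p" "p \<le> n"
    using k parade_layout.path_length_le_card[OF L] card by auto
  obtain lvl' where "parade_layout G p q lvl'"
    "\<And>w. w \<in> verts G - q ` {..<p} \<Longrightarrow> 2 \<le> lvl' w \<and> lvl' w \<le> 2 * p - 2"
    using parade_layout.clamp_spectators[OF L p(1)] by blast
  then interpret tight_parade_layout G p q lvl'
    using p(1) by (simp add: tight_parade_layout_def tight_parade_layout_axioms_def)
  have g': "graph (crowd_graph m)"
    using parade_layout.layout_graph[OF crowd_layout[OF m]] .
  have usp: "p \<le> usp (crowd_graph m)"
    using length_le_usp[OF g' unique_shortest_path_crowd[OF m]] by simp
  then have "crowd_graph m = G"
    using minor_maximal_spanning_subgraph_eq[OF max g' spanning_subgraph_crowd[OF mG] mult_crowd_le[OF m]]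
      np card unfolding sp_def by simp
  moreover have "k \<le> sp (crowd_graph m)"
    using sp_floor_le_sp[OF g is_minor_refl] spf \<open>crowd_graph m = G\<close> by simp
  then have "usp (crowd_graph m) = p" "p = n - k"
    using usp np card usp_le_card[OF g'] unfolding sp_def by auto
  ultimately show ?thesis
    using saturated_crowd[OF m \<open>usp (crowd_graph m) = p\<close>] by simp
qed

theorem theorem7p6:
  fixes n m k :: nat and G :: mgraph
  assumes "(k + 2 \<le> n \<and> 1 \<le> m) \<or> (k + 1 = n \<and> 2 \<le> m)"
    and "minor_maximal (graph_class n m k) G"
  shows "saturated_crowded_parade m (n - k) G"
  using assms(1)
proof
  assume "k + 2 \<le> n \<and> 1 \<le> m"
  then show ?thesis
    using minor_maximal_crowd[OF assms(2)] by blast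
next
  assume "k + 1 = n \<and> 2 \<le> m"
  then show ?thesis
    using minor_maximal_complete[OF assms(2)] by fastforce
qed

end
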